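(* Fix $m\ge 2$. Assume that for all $(s,k)$ an $m$-odd-even merger $\mathrm{oe\_merge}^s_k$ of order $k$ on $s$ inputs is given. Define recursively, for $1\le k\le n$, the comparator network $\mathrm{oe\_sel}^n_k$ on input $\bar x\in X^n$ as follows. If $k=1$: output $\max^n(\bar x)$. If $k\ge 2$: choose integers $n_1\ge\dots\ge n_m\ge 0$ with $\sum_i n_i=n$ and $n_1<n$. Split $\bar x$ into consecutive blocks $\bar x^1,\dots,\bar x^m$ of lengths $n_1,\dots,n_m$. For each $i$ let $k_i=\min(k,n_i)$ and $\bar y^i=\mathrm{oe\_sel}^{n_i}_{k_i}(\bar x^i)$ (with $\bar y^i=\bar x^i$ if $k_i=0$). Let $s=\sum_ik_i$ and $\overline{out}=\mathrm{suff}(k_1+1,\bar y^1)::\dots::\mathrm{suff}(k_m+1,\bar y^m)$. Output $\mathrm{oe\_merge}^s_k(\langle \mathrm{pref}(k_1,\bar y^1),\dots,\mathrm{pref}(k_m,\bar y^m)\rangle)::\overline{out}$. Then for every choice of the splittings, $\mathrm{oe\_sel}^n_k$ is a $k$-selection network, i.e. for every $\bar x\in X^n$ the output is top $k$ sorted.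
   Context: $X$ is a totally ordered set. A sequence is sorted if it is non-increasing. $::$ is concatenation; $\mathrm{pref}(i,\bar x)=\langle x_1,\dots,x_i\rangle$, $\mathrm{suff}(i,\bar x)=\langle x_i,\dots,x_n\rangle$ (empty if $i>n$). A comparator network is a map on sequences obtained by composing sorters (which rearrange the values at chosen positions into non-increasing order) and fixed rearrangements of positions; it permutes its input. $\max^n$ is a comparator network on $n$ inputs whose first output is the maximum of the inputs. A sequence $\bar x\in X^n$ is top $k$ sorted ($k\le n$) if $\langle x_1,\dots,x_k\rangle$ is sorted and $x_i\ge x_j$ for all $i\le k<j$; by convention a sequence of length at most $k$ is top $k$ sorted iff it is sorted. A $k$-selection network on $n$ inputs is a comparator network whose output is top $k$ sorted for every input. An $m$-odd-even merger of order $k$ on $s$ inputs is a comparator network $f$ such that for every tuple $\langle\bar x^1,\dots,\bar x^m\rangle$ in which each $\bar x^i$ is top $k$ sorted and $\sum_i|\bar x^i|=s$, $f(\bar x^1::\dots::\bar x^m)$ is top $k$ sorted. *)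

theory Defs
  imports Main
begin

text \<open>Sequences over a totally ordered set are lists over a linorder type;
positions are 0-based (position i here is position i+1 in the paper).
"Sorted" means non-increasing.\<close>

definition sorted_dec :: "'a::linorder list \<Rightarrow> bool" where
  "sorted_dec xs \<longleftrightarrow> sorted_wrt (\<ge>) xs"

definition top_k_sorted :: "nat \<Rightarrow> 'a::linorder list \<Rightarrow> bool" where
  "top_k_sorted k xs \<longleftrightarrow>
     (if length xs \<le> k then sorted_dec xs
      else sorted_dec (take k xs) \<and>
           (\<forall>i j. i < k \<and> k \<le> j \<and> j < length xs \<longrightarrow> xs ! i \<ge> xs ! j))"

text \<open>A sorter on the set P of positions: the values at the positions in P are
rearranged into non-increasing order (in increasing order of positions); the
other positions are untouched.\<close>
definition sorter :: "nat set \<Rightarrow> 'a::linorder list \<Rightarrow> 'a list" where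
  "sorter P xs =
     (let vs = rev (sort (map (nth xs) (sorted_list_of_set P)))
      in map (\<lambda>i. if i \<in> P then vs ! card {p\<in>P. p < i} else xs ! i) [0..<length xs])"

definition rearrange :: "(nat \<Rightarrow> nat) \<Rightarrow> 'a list \<Rightarrow> 'a list" where
  "rearrange \<pi> xs = map (\<lambda>i. xs ! \<pi> i) [0..<length xs]"

inductive comp_net :: "nat \<Rightarrow> ('a::linorder list \<Rightarrow> 'a list) \<Rightarrow> bool" for n where
  cn_id: "comp_net n id"
| cn_sorter: "P \<subseteq> {..<n} \<Longrightarrow> comp_net n (sorter P)"
| cn_rearrange: "bij_betw \<pi> {..<n} {..<n} \<Longrightarrow> comp_net n (rearrange \<pi>)"
| cn_comp: "comp_net n f \<Longrightarrow> comp_net n g \<Longrightarrow> comp_net n (g \<circ> f)"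

definition is_max_net :: "nat \<Rightarrow> ('a::linorder list \<Rightarrow> 'a list) \<Rightarrow> bool" where
  "is_max_net n f \<longleftrightarrow> comp_net n f \<and>
     (\<forall>xs. length xs = n \<longrightarrow> hd (f xs) = Max (set xs))"

definition is_oe_merger :: "nat \<Rightarrow> nat \<Rightarrow> nat \<Rightarrow> ('a::linorder list \<Rightarrow> 'a list) \<Rightarrow> bool" where
  "is_oe_merger m k s f \<longleftrightarrow> comp_net s f \<and>
     (\<forall>xss. length xss = m \<and> (\<forall>xs\<in>set xss. top_k_sorted k xs) \<and>
            sum_list (map length xss) = s \<longrightarrow> top_k_sorted k (f (concat xss)))"

text \<open>One recursive step of oe_sel: ns = [n_1,...,n_m] are the block lengths,
fs!i is the network used on block i (ignored when n_i = 0), merge s k is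
the given merger oe_merge^s_k.\<close>
definition oe_step :: "(nat \<Rightarrow> nat \<Rightarrow> 'a list \<Rightarrow> 'a list) \<Rightarrow> nat \<Rightarrow> nat list
    \<Rightarrow> ('a list \<Rightarrow> 'a list) list \<Rightarrow> 'a list \<Rightarrow> 'a list" where
  "oe_step merge k ns fs xs =
     (let m = length ns;
          blocks = map (\<lambda>i. take (ns ! i) (drop (sum_list (take i ns)) xs)) [0..<m];
          ys = map (\<lambda>i. if ns ! i = 0 then blocks ! i else (fs ! i) (blocks ! i)) [0..<m];
          ks = map (\<lambda>i. min k (ns ! i)) [0..<m];
          s = sum_list ks
      in merge s k (concat (map (\<lambda>i. take (ks ! i) (ys ! i)) [0..<m]))
         @ concat (map (\<lambda>i. drop (ks ! i) (ys ! i)) [0..<m]))"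

text \<open>oe_sel m maxn merge n k f: f is one of the networks oe_sel^n_k obtained
by some choice of splittings (at every node of the recursion).\<close>
inductive oe_sel :: "nat \<Rightarrow> (nat \<Rightarrow> 'a::linorder list \<Rightarrow> 'a list)
    \<Rightarrow> (nat \<Rightarrow> nat \<Rightarrow> 'a list \<Rightarrow> 'a list) \<Rightarrow> nat \<Rightarrow> nat \<Rightarrow> ('a list \<Rightarrow> 'a list) \<Rightarrow> bool"
  for m maxn merge where
  sel_base: "1 \<le> n \<Longrightarrow> oe_sel m maxn merge n 1 (maxn n)"
| sel_step: "\<lbrakk>2 \<le> k; k \<le> n; length ns = m; sorted_wrt (\<ge>) ns; sum_list ns = n;
     hd ns < n; length fs = m;
     \<forall>i<m. 0 < ns ! i \<longrightarrow> oe_sel m maxn merge (ns ! i) (min k (ns ! i)) (fs ! i)\<rbrakk>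
   \<Longrightarrow> oe_sel m maxn merge n k (oe_step merge k ns fs)"

end

theory Submission
  imports Defs "HOL-Library.Multiset"
begin

text \<open>Comparator networks only permute their input, so the merger
outputs a top k sorted permutation of the concatenated block prefixes. An element z left behind in
the tail of block i is dominated by the k entries of the prefix of block i; these are k merger
inputs that are at least z, hence each of the first k merger outputs is at least z.\<close>

lemma sorted_dec_iff_nth:
  "sorted_dec xs \<longleftrightarrow> (\<forall>i j. i \<le> j \<longrightarrow> j < length xs \<longrightarrow> xs ! j \<le> xs ! i)"
  unfolding sorted_dec_def sorted_wrt_iff_nth_less
  by (metis le_less)

lemma top_k_sorted_iff_nth:
  "top_k_sorted k xs \<longleftrightarrow>
     (\<forall>i j. i \<le> j \<longrightarrow> i < k \<longrightarrow> j < length xs \<longrightarrow> xs ! j \<le> xs ! i)"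
proof (cases "length xs \<le> k")
  case True
  then show ?thesis
    unfolding top_k_sorted_def sorted_dec_iff_nth by (auto intro: le_less_trans)
next
  case False
  then show ?thesis
    unfolding top_k_sorted_def sorted_dec_iff_nth
    by (auto simp: not_le) (metis leI)
qed

lemma top_k_sorted_nth_le:
  "top_k_sorted k xs \<Longrightarrow> i \<le> j \<Longrightarrow> i < k \<Longrightarrow> j < length xs \<Longrightarrow> xs ! j \<le> xs ! i"
  by (simp add: top_k_sorted_iff_nth)

lemma top_k_sorted_min_length:
  "top_k_sorted (min k (length xs)) xs \<longleftrightarrow> top_k_sorted k xs"
  by (auto simp: top_k_sorted_iff_nth)

lemma top_k_sorted_take: "top_k_sorted k xs \<Longrightarrow> top_k_sorted k (take k xs)"
  by (simp add: top_k_sorted_iff_nth)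

lemma top_k_sorted_drop_le_take:
  assumes "top_k_sorted k xs" "z \<in> set (drop k xs)" "x \<in> set (take k xs)"
  shows "z \<le> x"
proof -
  obtain i j where "x = xs ! i" "i < k" "z = xs ! j" "k \<le> j" "j < length xs"
    using assms(2,3) by (auto simp: in_set_conv_nth)
  then show ?thesis
    using top_k_sorted_nth_le[OF assms(1), of i j] by simp
qed

lemma top_k_sorted_ge_if_count_ge:
  assumes "top_k_sorted k xs" "k \<le> length (filter ((\<le>) z) xs)" "i < k"
  shows "z \<le> xs ! i"
proof (rule ccontr)
  assume "\<not> z \<le> xs ! i"
  then have "xs ! j < z" if "i \<le> j" "j < length xs" for j
    using top_k_sorted_nth_le[OF assms(1) that(1) assms(3) that(2)] by simp
  then have "filter ((\<le>) z) (drop i xs) = []"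
    by (auto simp: filter_empty_conv in_set_conv_nth not_le)
  then have "length (filter ((\<le>) z) xs) = length (filter ((\<le>) z) (take i xs))"
    by (metis append_Nil2 append_take_drop_id filter_append)
  also have "\<dots> \<le> i"
    using length_filter_le[of "(\<le>) z" "take i xs"] by simp
  finally show False
    using assms(2,3) by simp
qed

lemma length_filter_concat_ge:
  "ys \<in> set yss \<Longrightarrow> length (filter P ys) \<le> length (filter P (concat yss))"
  by (induction yss) auto

lemma top_k_sorted_append_drops:
  assumes yss: "\<forall>ys\<in>set yss. top_k_sorted k ys"
    and M: "top_k_sorted k M" "mset M = mset (concat (map (take k) yss))"
  shows "top_k_sorted k (M @ concat (map (drop k) yss))"
proof -
  let ?out = "concat (map (drop k) yss)"
  have below_top: "k \<le> length M \<and> (\<forall>i<k. z \<le> M ! i)" if z: "z \<in> set ?out" for z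
  proof -
    obtain ys where ys: "ys \<in> set yss" "z \<in> set (drop k ys)"
      using z by auto
    have "filter ((\<le>) z) (take k ys) = take k ys"
      using top_k_sorted_drop_le_take[of k ys z] yss ys by (auto simp: filter_id_conv)
    then have "k = length (filter ((\<le>) z) (take k ys))"
      using ys(2) by (auto dest: in_set_dropD simp: min_def)
    also have "\<dots> \<le> length (filter ((\<le>) z) (concat (map (take k) yss)))"
      using ys(1) by (intro length_filter_concat_ge) auto
    also have "\<dots> = length (filter ((\<le>) z) M)"
      using M(2) by (metis mset_filter size_mset)
    finally have count: "k \<le> length (filter ((\<le>) z) M)" .
    then show ?thesis
      using top_k_sorted_ge_if_count_ge[OF M(1) count] length_filter_le[of _ M] le_trans by blast
  qed
  show ?thesis
    unfolding top_k_sorted_iff_nth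
  proof (intro allI impI)
    fix i j
    assume ij: "i \<le> j" "i < k" "j < length (M @ ?out)"
    show "(M @ ?out) ! j \<le> (M @ ?out) ! i"
    proof (cases "j < length M")
      case True
      then show ?thesis
        using top_k_sorted_nth_le[OF M(1) ij(1,2)] ij(1) by (simp add: nth_append)
    next
      case False
      then have "(M @ ?out) ! j = ?out ! (j - length M)" "j - length M < length ?out"
        using ij(3) by (simp_all add: nth_append)
      then have "(M @ ?out) ! j \<in> set ?out"
        by (metis nth_mem)
      then have "k \<le> length M" "(M @ ?out) ! j \<le> M ! i"
        using below_top ij(2) by blast+
      then show ?thesis
        using ij(2) by (simp add: nth_append)
    qed
  qed
qed

lemma card_less_sorted_list_of_set_nth:
  assumes "finite P" "c < card P"
  shows "card {p\<in>P. p < sorted_list_of_set P ! c} = c"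
proof -
  let ?L = "sorted_list_of_set P"
  have len: "length ?L = card P"
    using assms(1) by simp
  have mem: "?L ! d \<in> P" if "d < card P" for d
    using assms(1) that len by (metis nth_mem set_sorted_list_of_set)
  have less_iff: "?L ! d < ?L ! c \<longleftrightarrow> d < c" if "d < card P" for d
    using assms that len strict_sorted_list_of_set[of P]
    by (metis linorder_neqE_nat order_less_asym sorted_wrt_nth_less)
  have "{p\<in>P. p < ?L ! c} = nth ?L ` {..<c}"
  proof (intro set_eqI iffI)
    fix p
    assume p: "p \<in> {p\<in>P. p < ?L ! c}"
    then have "p \<in> set ?L"
      using assms(1) by simp
    then obtain d where d: "d < card P" "p = ?L ! d"
      using len by (metis in_set_conv_nth)
    then have "d < c"
      using p less_iff by auto
    then show "p \<in> nth ?L ` {..<c}"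
      using d by auto
  next
    fix p
    assume "p \<in> nth ?L ` {..<c}"
    then show "p \<in> {p\<in>P. p < ?L ! c}"
      using assms(2) less_iff mem by auto
  qed
  moreover have "inj_on (nth ?L) {..<c}"
    using assms len by (intro inj_onI) (simp add: nth_eq_iff_index_eq)
  ultimately show ?thesis
    by (simp add: card_image)
qed

lemma mset_sorter:
  assumes "P \<subseteq> {..<length xs}"
  shows "mset (sorter P xs) = mset xs"
proof -
  let ?n = "length xs" and ?L = "sorted_list_of_set P"
  define vs where "vs = rev (sort (map (nth xs) ?L))"
  define h where "h i = (if i \<in> P then vs ! card {p\<in>P. p < i} else xs ! i)" for i
  have fin: "finite P"
    using assms finite_subset by blast
  have mem: "?L ! i \<in> P" if "i < card P" for i
    using fin that by (metis length_sorted_list_of_set nth_mem set_sorted_list_of_set)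
  have filter_P: "mset (filter (\<lambda>i. i \<in> P) [0..<?n]) = mset ?L"
    using assms fin by (auto simp: mset_set_set[symmetric] intro!: arg_cong[where f = mset_set])
  define R where "R = {#i \<in># mset [0..<?n]. i \<notin> P#}"
  have split: "mset [0..<?n] = mset ?L + R"
    unfolding R_def filter_P[symmetric] mset_filter by (metis union_filter_mset_complement)
  have "map h ?L = vs"
    using fin by (intro nth_equalityI)
      (auto simp: h_def vs_def card_less_sorted_list_of_set_nth intro: mem)
  then have "image_mset h (mset ?L) = image_mset (nth xs) (mset ?L)"
    by (metis mset_map mset_rev mset_sort vs_def)
  moreover have "image_mset h R = image_mset (nth xs) R"
    by (intro image_mset_cong) (simp add: h_def R_def)
  ultimately have "image_mset h (mset ?L + R) = image_mset (nth xs) (mset ?L + R)"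
    by (simp only: image_mset_union)
  then have "image_mset h (mset [0..<?n]) = image_mset (nth xs) (mset [0..<?n])"
    by (simp only: split[symmetric])
  moreover have "sorter P xs = map h [0..<?n]"
    unfolding sorter_def h_def vs_def Let_def by simp
  moreover have "mset xs = image_mset (nth xs) (mset [0..<?n])"
    by (simp only: mset_map[symmetric] map_nth)
  ultimately show ?thesis
    by simp
qed

lemma mset_rearrange:
  assumes "bij_betw \<pi> {..<length xs} {..<length xs}"
  shows "mset (rearrange \<pi> xs) = mset xs"
proof -
  let ?n = "length xs"
  have "mset (map \<pi> [0..<?n]) = image_mset \<pi> (mset_set {..<?n})"
    by (simp add: atLeast_upt)
  also have "\<dots> = mset_set (\<pi> ` {..<?n})"
    using assms by (simp add: bij_betw_def image_mset_mset_set)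
  also have "\<dots> = mset [0..<?n]"
    using assms by (simp add: bij_betw_def atLeast_upt)
  finally have perm: "mset (map \<pi> [0..<?n]) = mset [0..<?n]" .
  have "mset (rearrange \<pi> xs) = image_mset (nth xs) (mset (map \<pi> [0..<?n]))"
    by (simp add: rearrange_def multiset.map_comp comp_def)
  also have "\<dots> = image_mset (nth xs) (mset [0..<?n])"
    by (simp only: perm)
  also have "\<dots> = mset xs"
    by (metis map_nth mset_map)
  finally show ?thesis .
qed

lemma comp_net_mset:
  "comp_net n g \<Longrightarrow> length xs = n \<Longrightarrow> mset (g xs) = mset xs"
proof (induction arbitrary: xs rule: comp_net.induct)
  case (cn_comp f g)
  then have "mset (f xs) = mset xs"
    by simp
  moreover have "length (f xs) = n"
    using calculation cn_comp.prems by (metis size_mset)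
  ultimately show ?case
    using cn_comp.IH(2) by simp
qed (simp_all add: mset_sorter mset_rearrange)

lemma top_k_sorted_1_if_hd_Max:
  assumes "hd xs = Max (set xs)"
  shows "top_k_sorted 1 xs"
  unfolding top_k_sorted_iff_nth
proof (intro allI impI)
  fix i j :: nat
  assume ij: "i \<le> j" "i < 1" "j < length xs"
  then have "xs ! i = Max (set xs)"
    using assms by (cases xs) auto
  moreover have "xs ! j \<le> Max (set xs)"
    using ij(3) by simp
  ultimately show "xs ! j \<le> xs ! i"
    by simp
qed

definition oe_blocks :: "nat list \<Rightarrow> 'a list \<Rightarrow> 'a list list" where
  "oe_blocks ns xs = map (\<lambda>i. take (ns ! i) (drop (sum_list (take i ns)) xs)) [0..<length ns]"

lemma length_oe_blocks_nth:
  assumes "sum_list ns = length xs" "i < length ns"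
  shows "length (oe_blocks ns xs ! i) = ns ! i"
proof -
  have "sum_list (take i ns) + ns ! i = sum_list (take (Suc i) ns)"
    using assms(2) by (simp add: take_Suc_conv_app_nth)
  also have "\<dots> \<le> sum_list ns"
    by (metis append_take_drop_id le_add1 sum_list_append)
  finally show ?thesis
    using assms by (simp add: oe_blocks_def)
qed

lemma oe_step_eq_merge_append:
  assumes yss: "yss = map (\<lambda>i. if ns ! i = 0 then oe_blocks ns xs ! i
                                  else (fs ! i) (oe_blocks ns xs ! i)) [0..<length ns]"
    and lengths: "\<forall>i<length ns. length (yss ! i) = ns ! i"
  shows "oe_step merge k ns fs xs =
    merge (length (concat (map (take k) yss))) k (concat (map (take k) yss))
    @ concat (map (drop k) yss)"
proof -
  let ?ks = "map (\<lambda>i. min k (ns ! i)) [0..<length ns]"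
  have len: "length yss = length ns"
    using yss by simp
  have take_eq: "map (\<lambda>i. take (?ks ! i) (yss ! i)) [0..<length ns] = map (take k) yss"
    using len lengths by (intro nth_equalityI) (auto simp: min_def)
  have drop_eq: "map (\<lambda>i. drop (?ks ! i) (yss ! i)) [0..<length ns] = map (drop k) yss"
    using len lengths by (intro nth_equalityI) (auto simp: min_def)
  have "?ks = map length (map (take k) yss)"
    using len lengths by (intro nth_equalityI) auto
  then have sum_eq: "sum_list ?ks = length (concat (map (take k) yss))"
    by (simp add: length_concat)
  show ?thesis
    unfolding oe_step_def Let_def oe_blocks_def[symmetric] yss[symmetric] take_eq drop_eq sum_eq ..
qed

lemma length_concat_take_drop:
  "length (concat (map (take k) yss)) + length (concat (map (drop k) yss)) = length (concat yss)"
  by (induction yss) auto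

lemma is_oe_merger_append_drops:
  assumes merger: "is_oe_merger (length yss) k (length (concat (map (take k) yss))) g"
    and yss: "\<forall>ys\<in>set yss. top_k_sorted k ys"
  shows "length (g (concat (map (take k) yss)) @ concat (map (drop k) yss)) = length (concat yss)"
    and "top_k_sorted k (g (concat (map (take k) yss)) @ concat (map (drop k) yss))"
proof -
  let ?pre = "map (take k) yss"
  have "\<forall>p\<in>set ?pre. top_k_sorted k p"
    using yss by (simp add: top_k_sorted_take)
  then have sorted: "top_k_sorted k (g (concat ?pre))"
    using merger unfolding is_oe_merger_def by (simp add: length_concat)
  have perm: "mset (g (concat ?pre)) = mset (concat ?pre)"
    using merger comp_net_mset unfolding is_oe_merger_def by blast
  then show "length (g (concat ?pre) @ concat (map (drop k) yss)) = length (concat yss)"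
    using length_concat_take_drop[of k yss] by (metis length_append size_mset)
  show "top_k_sorted k (g (concat ?pre) @ concat (map (drop k) yss))"
    using sorted perm yss by (rule top_k_sorted_append_drops[rotated])
qed

lemma oe_sel_correct:
  fixes maxn :: "nat \<Rightarrow> 'a::linorder list \<Rightarrow> 'a list"
  assumes sel: "oe_sel m maxn merge n k f"
    and max_nets: "\<forall>n\<ge>1. is_max_net n (maxn n)"
    and mergers: "\<forall>s k. is_oe_merger m k s (merge s k)"
    and len: "length xs = n"
  shows "length (f xs) = n \<and> top_k_sorted k (f xs)"
  using sel len
proof (induction arbitrary: xs)
  case (sel_base n)
  then have "comp_net n (maxn n)" and hd: "hd (maxn n xs) = Max (set xs)"
    using max_nets unfolding is_max_net_def by auto
  then have "mset (maxn n xs) = mset xs"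
    using comp_net_mset sel_base.prems by blast
  then show ?case
    using hd top_k_sorted_1_if_hd_Max sel_base.prems by (metis set_mset_mset size_mset)
next
  case (sel_step k n ns fs)
  define yss where "yss = map (\<lambda>i. if ns ! i = 0 then oe_blocks ns xs ! i
                                    else (fs ! i) (oe_blocks ns xs ! i)) [0..<length ns]"
  have block: "length (oe_blocks ns xs ! i) = ns ! i" if "i < m" for i
    using sel_step.hyps(3,5) sel_step.prems that by (intro length_oe_blocks_nth) simp_all
  have ys: "length (yss ! i) = ns ! i \<and> top_k_sorted k (yss ! i)" if i: "i < m" for i
  proof (cases "ns ! i = 0")
    case True
    then show ?thesis
      using block i sel_step.hyps by (simp add: yss_def top_k_sorted_iff_nth)
  next
    case False
    then have "length (yss ! i) = ns ! i \<and> top_k_sorted (min k (ns ! i)) (yss ! i)"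
      using sel_step.IH block i sel_step.hyps by (simp add: yss_def)
    then show ?thesis
      using top_k_sorted_min_length by metis
  qed
  have len_yss: "length yss = m"
    using sel_step.hyps by (simp add: yss_def)
  have "map length yss = ns"
    using len_yss ys sel_step.hyps by (intro nth_equalityI) auto
  have "\<forall>ys\<in>set yss. top_k_sorted k ys"
    using len_yss ys by (metis in_set_conv_nth)
  moreover have "is_oe_merger (length yss) k (length (concat (map (take k) yss)))
      (merge (length (concat (map (take k) yss))) k)"
    using len_yss mergers by blast
  moreover have "length (concat yss) = n"
    using \<open>map length yss = ns\<close> sel_step.hyps by (simp add: length_concat)
  moreover have "oe_step merge k ns fs xs = merge (length (concat (map (take k) yss))) k
      (concat (map (take k) yss)) @ concat (map (drop k) yss)"
    using ys sel_step.hyps by (intro oe_step_eq_merge_append yss_def) auto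
  ultimately show ?case
    using is_oe_merger_append_drops by metis
qed

text \<open>The bounds on m and k, like the condition n_1 < n built into oe_sel, only ensure that the
recursion can be carried out; correctness does not depend on them.\<close>

theorem mainTheorem4:
  fixes m :: nat
    and maxn :: "nat \<Rightarrow> 'a::linorder list \<Rightarrow> 'a list"
    and merge :: "nat \<Rightarrow> nat \<Rightarrow> 'a list \<Rightarrow> 'a list"
  assumes "2 \<le> m"
    and "\<forall>n\<ge>1. is_max_net n (maxn n)"
    and "\<forall>s k. is_oe_merger m k s (merge s k)"
    and "1 \<le> k" and "k \<le> n"
    and "oe_sel m maxn merge n k f"
    and "length xs = n"
  shows "top_k_sorted k (f xs)"
  using oe_sel_correct[OF assms(6,2,3,7)] by blast

end
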